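(* Assume $G\in\mathcal{RH}_\infty$ and that $v$ is measurable, so the controller has the form $u=K\begin{bmatrix} y\\ v\end{bmatrix}$. Then $K$ is an output-rectifying retrofit controller if and only if $$K=\hat K R,\qquad R:=\begin{bmatrix} I & -G_{yv}\end{bmatrix},$$ where $\hat K$ is a stabilizing controller for $G_{yu}$. (That is, $K$ first forms the rectified output $\hat y=y-G_{yv}v$ and then applies $u=\hat K\hat y$.)
   Context: A subsystem is a proper real rational transfer matrix $G$ with inputs $(v,d,u)$ (interaction input, disturbance input, control input) and outputs $(w,z,y)$ (interaction output, evaluation output, measurement output), with blocks $G_{ab}$ denoting the transfer matrix from input $b$ to output $a$. $\mathcal{RH}_\infty$ is the set of stable, proper, real rational transfer matrices. For transfer matrices $H$ and $C$, $C$ is a stabilizing controller for $H$ if the positive feedback loop $y=Hu$, $u=Cy$ is internally stable (for $H\in\mathcal{RH}_\infty$ these are exactly $C=(I+\hat QH)^{-1}\hat Q$, $\hat Q\in\mathcal{RH}_\infty$). When $v$ is measurable, the measurement output is augmented to $(y,v)$ with $G_{(y,v)v}:=\begin{bmatrix} G_{yv}\\ I\end{bmatrix}$, $G_{(y,v)u}:=\begin{bmatrix} G_{yu}\\ 0\end{bmatrix}$. A controller $u=K\begin{bmatrix} y\\ v\end{bmatrix}$ is an output-rectifying retrofit controller if $K=(I+QG_{(y,v)u})^{-1}Q$ for some $Q\in\mathcal{RH}_\infty$ with $Q\,G_{(y,v)v}=0$. *)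

theory Defs
  imports "HOL-Computational_Algebra.Polynomial" "HOL-Computational_Algebra.Fraction_Field"
    Complex_Main "Jordan_Normal_Form.Matrix"
begin

text \<open>Scalars: real rational functions in the Laplace variable s, i.e. the fraction
  field of real polynomials.  Transfer matrices are matrices over this field.\<close>

type_synonym tf = "real poly fract"

definition RH_inf :: "tf \<Rightarrow> bool" where
  "RH_inf x \<longleftrightarrow> (\<exists>p q. q \<noteq> 0 \<and> x = Fract p q \<and> degree p \<le> degree q \<and>
      (\<forall>z::complex. poly (map_poly complex_of_real q) z = 0 \<longrightarrow> Re z < 0))"

definition RH_inf_mat :: "tf mat \<Rightarrow> bool" where
  "RH_inf_mat A \<longleftrightarrow> (\<forall>i < dim_row A. \<forall>j < dim_col A. RH_inf (A $$ (i, j)))"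

definition is_inverse_mat :: "tf mat \<Rightarrow> tf mat \<Rightarrow> bool" where
  "is_inverse_mat A B \<longleftrightarrow> inverts_mat A B \<and> inverts_mat B A"

text \<open>Internal stability of the positive feedback loop u = C y + e1, y = H u + e2,
  with H of size ny x nu and C of size nu x ny: the loop matrix
  [[I, -C], [-H, I]] is invertible (well-posedness) and its inverse, i.e. the
  closed-loop transfer matrix from (e1,e2) to (u,y), lies in RH-infinity.\<close>
definition stabilizing_controller :: "nat \<Rightarrow> nat \<Rightarrow> tf mat \<Rightarrow> tf mat \<Rightarrow> bool" where
  "stabilizing_controller ny nu H C \<longleftrightarrow>
     H \<in> carrier_mat ny nu \<and> C \<in> carrier_mat nu ny \<and>
     (\<exists>Minv. is_inverse_mat (four_block_mat (1\<^sub>m nu) (- C) (- H) (1\<^sub>m ny)) Minv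
            \<and> RH_inf_mat Minv)"

text \<open>Blocks of a subsystem G with inputs (v,d,u) of sizes (nv,nd,nu) and outputs
  (w,z,y) of sizes (nw,nz,ny).\<close>
definition G_yv :: "nat \<Rightarrow> nat \<Rightarrow> nat \<Rightarrow> nat \<Rightarrow> tf mat \<Rightarrow> tf mat" where
  "G_yv nw nz ny nv G = mat ny nv (\<lambda>(i, j). G $$ (nw + nz + i, j))"

definition G_yu :: "nat \<Rightarrow> nat \<Rightarrow> nat \<Rightarrow> nat \<Rightarrow> nat \<Rightarrow> nat \<Rightarrow> tf mat \<Rightarrow> tf mat" where
  "G_yu nw nz ny nv nd nu G = mat ny nu (\<lambda>(i, j). G $$ (nw + nz + i, nv + nd + j))"

definition G_yvv :: "nat \<Rightarrow> nat \<Rightarrow> nat \<Rightarrow> nat \<Rightarrow> tf mat \<Rightarrow> tf mat" where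
  "G_yvv nw nz ny nv G = mat (ny + nv) nv
     (\<lambda>(i, j). if i < ny then G_yv nw nz ny nv G $$ (i, j) else (if i - ny = j then 1 else 0))"

definition G_yvu :: "nat \<Rightarrow> nat \<Rightarrow> nat \<Rightarrow> nat \<Rightarrow> nat \<Rightarrow> nat \<Rightarrow> tf mat \<Rightarrow> tf mat" where
  "G_yvu nw nz ny nv nd nu G = mat (ny + nv) nu
     (\<lambda>(i, j). if i < ny then G_yu nw nz ny nv nd nu G $$ (i, j) else 0)"

definition output_rectifying_retrofit ::
    "nat \<Rightarrow> nat \<Rightarrow> nat \<Rightarrow> nat \<Rightarrow> nat \<Rightarrow> nat \<Rightarrow> tf mat \<Rightarrow> tf mat \<Rightarrow> bool" where
  "output_rectifying_retrofit nw nz ny nv nd nu G K \<longleftrightarrow>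
     (\<exists>Q \<in> carrier_mat nu (ny + nv). RH_inf_mat Q \<and>
        Q * G_yvv nw nz ny nv G = 0\<^sub>m nu nv \<and>
        (\<exists>Minv. is_inverse_mat (1\<^sub>m nu + Q * G_yvu nw nz ny nv nd nu G) Minv \<and>
               K = Minv * Q))"

definition rectifier :: "nat \<Rightarrow> nat \<Rightarrow> nat \<Rightarrow> nat \<Rightarrow> tf mat \<Rightarrow> tf mat" where
  "rectifier nw nz ny nv G = mat ny (ny + nv)
     (\<lambda>(i, j). if j < ny then (if i = j then 1 else 0) else - (G_yv nw nz ny nv G $$ (i, j - ny)))"

end

theory Submission
  imports Defs "Jordan_Normal_Form.Determinant"
begin

text \<open>For a stable plant \<open>H\<close>, the stabilizing controllers are exactly the Youla controllers
  \<open>(I + Q H)\<^sup>-\<^sup>1 Q\<close> with \<open>Q\<close> stable: from \<open>Q\<close> the inverse of the loop matrix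
  \<open>[[I, -C], [-H, I]]\<close> can be written down and is stable, and conversely \<open>Q\<close> is the
  off-diagonal block \<open>(I - C H)\<^sup>-\<^sup>1 C\<close> of the closed loop.
  On the retrofit side, the rectifier \<open>R = [I, -G_yv]\<close> annihilates \<open>[G_yv; I]\<close> and
  \<open>[I; 0] R + [G_yv; I] [0, I] = I\<close>, so \<open>Q [G_yv; I] = 0\<close> holds exactly when
  \<open>Q = Q' R\<close> for some (necessarily stable) \<open>Q'\<close>. Then \<open>Q G_(y,v)u = Q' G_yu\<close>, and the
  retrofit controller \<open>(I + Q G_(y,v)u)\<^sup>-\<^sup>1 Q\<close> is the Youla controller for \<open>G_yu\<close> with
  parameter \<open>Q'\<close>, followed by \<open>R\<close>.\<close>

section \<open>Stable proper rational functions\<close>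

definition hurwitz_stable :: "real poly \<Rightarrow> bool" where
  "hurwitz_stable q \<longleftrightarrow> (\<forall>z::complex. poly (map_poly of_real q) z = 0 \<longrightarrow> Re z < 0)"

lemma RH_inf_iff_hurwitz:
  "RH_inf x \<longleftrightarrow> (\<exists>p q. q \<noteq> 0 \<and> x = Fract p q \<and> degree p \<le> degree q \<and> hurwitz_stable q)"
  unfolding RH_inf_def hurwitz_stable_def ..

lemma map_poly_of_real_add:
  "map_poly of_real (p + q) = map_poly of_real p + (map_poly of_real q :: 'a::real_algebra_1 poly)"
  by (intro poly_eqI) (simp add: coeff_map_poly)

lemma map_poly_of_real_mult:
  "map_poly of_real (p * q) =
    map_poly of_real p * (map_poly of_real q :: 'a::{real_algebra_1, comm_ring} poly)"
  by (induction p)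
    (simp_all add: map_poly_of_real_add map_poly_smult map_poly_pCons mult_pCons_left)

lemma hurwitz_stable_1: "hurwitz_stable 1"
  by (simp add: hurwitz_stable_def)

lemma hurwitz_stable_mult: "hurwitz_stable p \<Longrightarrow> hurwitz_stable q \<Longrightarrow> hurwitz_stable (p * q)"
  by (simp add: hurwitz_stable_def map_poly_of_real_mult)

lemma RH_inf_0: "RH_inf 0"
  unfolding RH_inf_iff_hurwitz
  by (intro exI[of _ 0] exI[of _ 1]) (simp add: Zero_fract_def hurwitz_stable_1)

lemma RH_inf_1: "RH_inf 1"
  unfolding RH_inf_iff_hurwitz
  by (intro exI[of _ 1] exI[of _ 1]) (simp add: One_fract_def hurwitz_stable_1)

lemma RH_inf_uminus: "RH_inf x \<Longrightarrow> RH_inf (- x)"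
  unfolding RH_inf_iff_hurwitz by (metis degree_minus minus_fract)

lemma RH_inf_mult:
  assumes "RH_inf x" "RH_inf y"
  shows "RH_inf (x * y)"
proof -
  obtain p q p' q' where x: "q \<noteq> 0" "x = Fract p q" "degree p \<le> degree q" "hurwitz_stable q"
    and y: "q' \<noteq> 0" "y = Fract p' q'" "degree p' \<le> degree q'" "hurwitz_stable q'"
    using assms unfolding RH_inf_iff_hurwitz by blast
  have "degree (p * p') \<le> degree (q * q')"
    using x y degree_mult_le[of p p'] by (simp add: degree_mult_eq)
  with x y show ?thesis
    unfolding RH_inf_iff_hurwitz
    by (intro exI[of _ "p * p'"] exI[of _ "q * q'"]) (simp add: hurwitz_stable_mult)
qed

lemma RH_inf_add:
  assumes "RH_inf x" "RH_inf y"
  shows "RH_inf (x + y)"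
proof -
  obtain p q p' q' where x: "q \<noteq> 0" "x = Fract p q" "degree p \<le> degree q" "hurwitz_stable q"
    and y: "q' \<noteq> 0" "y = Fract p' q'" "degree p' \<le> degree q'" "hurwitz_stable q'"
    using assms unfolding RH_inf_iff_hurwitz by blast
  have "degree (p * q' + p' * q) \<le> degree q + degree q'"
    using x y degree_mult_le[of p q'] degree_mult_le[of p' q] by (intro degree_add_le) auto
  with x y show ?thesis
    unfolding RH_inf_iff_hurwitz
    by (intro exI[of _ "p * q' + p' * q"] exI[of _ "q * q'"])
      (simp add: hurwitz_stable_mult degree_mult_eq)
qed

lemma RH_inf_sum: "(\<And>i. i \<in> S \<Longrightarrow> RH_inf (f i)) \<Longrightarrow> RH_inf (sum f S)"
  by (induction S rule: infinite_finite_induct) (auto simp: RH_inf_0 RH_inf_add)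

lemma RH_inf_mat_mult:
  "RH_inf_mat A \<Longrightarrow> RH_inf_mat B \<Longrightarrow> dim_col A = dim_row B \<Longrightarrow> RH_inf_mat (A * B)"
  unfolding RH_inf_mat_def by (auto simp: scalar_prod_def intro!: RH_inf_sum RH_inf_mult)

lemma RH_inf_mat_add:
  "RH_inf_mat A \<Longrightarrow> RH_inf_mat B \<Longrightarrow> dim_row A = dim_row B \<Longrightarrow> dim_col A = dim_col B \<Longrightarrow>
    RH_inf_mat (A + B)"
  unfolding RH_inf_mat_def by (auto intro!: RH_inf_add)

lemma RH_inf_mat_one: "RH_inf_mat (1\<^sub>m n)"
  unfolding RH_inf_mat_def by (auto simp: RH_inf_0 RH_inf_1)

lemma RH_inf_mat_four_block_iff:
  assumes "A \<in> carrier_mat nr nc" "B \<in> carrier_mat nr nc'"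
    and "C \<in> carrier_mat nr' nc" "D \<in> carrier_mat nr' nc'"
  shows "RH_inf_mat (four_block_mat A B C D) \<longleftrightarrow>
    RH_inf_mat A \<and> RH_inf_mat B \<and> RH_inf_mat C \<and> RH_inf_mat D"
proof
  assume RH: "RH_inf_mat (four_block_mat A B C D)"
  have entry: "RH_inf (four_block_mat A B C D $$ (i, j))" if "i < nr + nr'" "j < nc + nc'" for i j
    using RH assms that unfolding RH_inf_mat_def by simp
  have "RH_inf (A $$ (i, j))" if "i < nr" "j < nc" for i j
    using entry[of i j] that assms by simp
  moreover have "RH_inf (B $$ (i, j))" if "i < nr" "j < nc'" for i j
    using entry[of i "nc + j"] that assms by simp
  moreover have "RH_inf (C $$ (i, j))" if "i < nr'" "j < nc" for i j
    using entry[of "nr + i" j] that assms by simp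
  moreover have "RH_inf (D $$ (i, j))" if "i < nr'" "j < nc'" for i j
    using entry[of "nr + i" "nc + j"] that assms by simp
  ultimately show "RH_inf_mat A \<and> RH_inf_mat B \<and> RH_inf_mat C \<and> RH_inf_mat D"
    unfolding RH_inf_mat_def using assms by auto
next
  assume "RH_inf_mat A \<and> RH_inf_mat B \<and> RH_inf_mat C \<and> RH_inf_mat D"
  then show "RH_inf_mat (four_block_mat A B C D)"
    using assms unfolding RH_inf_mat_def by auto
qed

lemma RH_inf_mat_G_yu:
  "G \<in> carrier_mat (nw + nz + ny) (nv + nd + nu) \<Longrightarrow> RH_inf_mat G \<Longrightarrow>
    RH_inf_mat (G_yu nw nz ny nv nd nu G)"
  unfolding RH_inf_mat_def G_yu_def by auto

lemma RH_inf_mat_rectifier: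
  "G \<in> carrier_mat (nw + nz + ny) (nv + nd + nu) \<Longrightarrow> RH_inf_mat G \<Longrightarrow>
    RH_inf_mat (rectifier nw nz ny nv G)"
  unfolding RH_inf_mat_def rectifier_def G_yv_def
  by (auto simp: RH_inf_0 RH_inf_1 intro!: RH_inf_uminus)

section \<open>Block matrices and inverses\<close>

lemma four_block_mat_inject:
  assumes "A \<in> carrier_mat nr nc" "A' \<in> carrier_mat nr nc"
    and "B \<in> carrier_mat nr nc'" "B' \<in> carrier_mat nr nc'"
    and "C \<in> carrier_mat nr' nc" "C' \<in> carrier_mat nr' nc"
    and "D \<in> carrier_mat nr' nc'" "D' \<in> carrier_mat nr' nc'"
  shows "four_block_mat A B C D = four_block_mat A' B' C' D' \<longleftrightarrow>
    A = A' \<and> B = B' \<and> C = C' \<and> D = D'"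
proof
  assume eq: "four_block_mat A B C D = four_block_mat A' B' C' D'"
  have entry: "four_block_mat A B C D $$ (i, j) = four_block_mat A' B' C' D' $$ (i, j)" for i j
    by (simp only: eq)
  have "A $$ (i, j) = A' $$ (i, j)" if "i < nr" "j < nc" for i j
    using entry[of i j] that assms by simp
  moreover have "B $$ (i, j) = B' $$ (i, j)" if "i < nr" "j < nc'" for i j
    using entry[of i "j + nc"] that assms by simp
  moreover have "C $$ (i, j) = C' $$ (i, j)" if "i < nr'" "j < nc" for i j
    using entry[of "i + nr" j] that assms by simp
  moreover have "D $$ (i, j) = D' $$ (i, j)" if "i < nr'" "j < nc'" for i j
    using entry[of "i + nr" "j + nc"] that assms by simp
  ultimately show "A = A' \<and> B = B' \<and> C = C' \<and> D = D'"
    using assms by (auto intro!: eq_matI)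
qed simp

lemma add_uminus_cancel_mat:
  "A \<in> carrier_mat nr nc \<Longrightarrow> B \<in> carrier_mat nr nc \<Longrightarrow> A + B + - B = (A :: 'a::group_add mat)"
  by (intro eq_matI) auto

lemma uminus_add_cancel_mat:
  "A \<in> carrier_mat nr nc \<Longrightarrow> B \<in> carrier_mat nr nc \<Longrightarrow> - B + (A + B) = (A :: 'a::ab_group_add mat)"
  by (intro eq_matI) auto

lemma add_uminus_eqD_mat:
  assumes "A \<in> carrier_mat nr nc" "B \<in> carrier_mat nr nc" "A + - B = D"
  shows "A = D + (B :: 'a::ab_group_add mat)"
  using assms by (auto intro!: eq_matI)

lemma uminus_add_eqD_mat:
  assumes "A \<in> carrier_mat nr nc" "B \<in> carrier_mat nr nc" "- B + A = D"
  shows "A = D + (B :: 'a::ab_group_add mat)"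
  using assms by (auto intro!: eq_matI)

text \<open>Rational functions form a field, so one-sided inverses of square matrices are two-sided.\<close>

lemma is_inverse_mat_iff_right_inverse:
  assumes A: "A \<in> carrier_mat n n"
  shows "is_inverse_mat A B \<longleftrightarrow> B \<in> carrier_mat n n \<and> A * B = 1\<^sub>m n"
proof
  assume "is_inverse_mat A B"
  then have AB: "A * B = 1\<^sub>m n" and BA: "B * A = 1\<^sub>m (dim_row B)"
    using A unfolding is_inverse_mat_def inverts_mat_def by auto
  have "dim_col B = n" "dim_row B = n"
    using arg_cong[OF AB, of dim_col] arg_cong[OF BA, of dim_col] A by auto
  with AB show "B \<in> carrier_mat n n \<and> A * B = 1\<^sub>m n"
    by auto
next
  assume "B \<in> carrier_mat n n \<and> A * B = 1\<^sub>m n"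
  with A show "is_inverse_mat A B"
    unfolding is_inverse_mat_def inverts_mat_def by (auto intro: mat_mult_left_right_inverse)
qed

section \<open>Youla parametrization for a stable plant\<close>

abbreviation loop_mat :: "nat \<Rightarrow> nat \<Rightarrow> 'a::comm_ring_1 mat \<Rightarrow> 'a mat \<Rightarrow> 'a mat" where
  "loop_mat m n C H \<equiv> four_block_mat (1\<^sub>m m) (- C) (- H) (1\<^sub>m n)"

text \<open>The left factor is the closed loop of the Youla controller \<open>C = (I + Q H)\<^sup>-\<^sup>1 Q\<close>:
  its upper left block \<open>I + Q H\<close> is the inverse of \<open>I - C H\<close>.\<close>

lemma loop_mat_left_inverse_of_youla:
  fixes H :: "'a::comm_ring_1 mat"
  assumes H: "H \<in> carrier_mat n m" and Q: "Q \<in> carrier_mat m n"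
    and Pinv: "Pinv \<in> carrier_mat m m" and inv: "(1\<^sub>m m + Q * H) * Pinv = 1\<^sub>m m"
  shows "four_block_mat (1\<^sub>m m + Q * H) Q (H * (1\<^sub>m m + Q * H)) (1\<^sub>m n + H * Q)
    * loop_mat m n (Pinv * Q) H = 1\<^sub>m (m + n)"
proof -
  define P where "P = 1\<^sub>m m + Q * H"
  have P: "P \<in> carrier_mat m m" using H Q by (simp add: P_def)
  have PC: "P * (Pinv * Q) = Q"
    using inv P Pinv Q by (simp add: P_def assoc_mult_mat[symmetric])
  have HP: "(1\<^sub>m n + H * Q) * H = H * P"
  proof -
    have "(1\<^sub>m n + H * Q) * H = 1\<^sub>m n * H + H * Q * H"
      using H Q by (intro add_mult_distrib_mat) auto
    also have "\<dots> = H * 1\<^sub>m m + H * (Q * H)"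
      using H Q by simp
    also have "\<dots> = H * P"
      unfolding P_def using H Q by (intro mult_add_distrib_mat[symmetric]) auto
    finally show ?thesis .
  qed
  have "four_block_mat P Q (H * P) (1\<^sub>m n + H * Q) * loop_mat m n (Pinv * Q) H
    = four_block_mat (P * 1\<^sub>m m + Q * - H) (P * - (Pinv * Q) + Q * 1\<^sub>m n)
        (H * P * 1\<^sub>m m + (1\<^sub>m n + H * Q) * - H)
        (H * P * - (Pinv * Q) + (1\<^sub>m n + H * Q) * 1\<^sub>m n)"
    using H Q P Pinv by (intro mult_four_block_mat) auto
  also have "\<dots> = four_block_mat (1\<^sub>m m) (0\<^sub>m m n) (0\<^sub>m n m) (1\<^sub>m n)"
  proof (rule cong_four_block_mat)
    show "P * 1\<^sub>m m + Q * - H = 1\<^sub>m m"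
      using H Q by (simp add: P_def add_uminus_cancel_mat[of _ m m])
    show "P * - (Pinv * Q) + Q * 1\<^sub>m n = 0\<^sub>m m n"
      using PC P Q Pinv by simp
    show "H * P * 1\<^sub>m m + (1\<^sub>m n + H * Q) * - H = 0\<^sub>m n m"
      using HP H P Q by (simp add: add_uminus_minus_mat[of "H * P" n m])
    have "H * P * - (Pinv * Q) = - (H * Q)"
      using PC H P Q Pinv by (simp add: assoc_mult_mat[of H n m P m _ n])
    then show "H * P * - (Pinv * Q) + (1\<^sub>m n + H * Q) * 1\<^sub>m n = 1\<^sub>m n"
      using H Q by (simp add: uminus_add_cancel_mat[of _ n n])
  qed
  finally show ?thesis by (simp add: P_def)
qed

lemma youla_of_loop_mat_left_inverse:
  fixes H :: "'a::field mat"
  assumes H: "H \<in> carrier_mat n m" and C: "C \<in> carrier_mat m n"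
    and N: "N11 \<in> carrier_mat m m" "N12 \<in> carrier_mat m n"
      "N21 \<in> carrier_mat n m" "N22 \<in> carrier_mat n n"
    and inv: "four_block_mat N11 N12 N21 N22 * loop_mat m n C H = 1\<^sub>m (m + n)"
  shows "(1\<^sub>m m + N12 * H) * (1\<^sub>m m - C * H) = 1\<^sub>m m" and "C = (1\<^sub>m m - C * H) * N12"
proof -
  have "four_block_mat (N11 * 1\<^sub>m m + N12 * - H) (N11 * - C + N12 * 1\<^sub>m n)
      (N21 * 1\<^sub>m m + N22 * - H) (N21 * - C + N22 * 1\<^sub>m n)
    = four_block_mat N11 N12 N21 N22 * loop_mat m n C H"
    using H C N by (intro mult_four_block_mat[symmetric]) auto
  also have "\<dots> = four_block_mat (1\<^sub>m m) (0\<^sub>m m n) (0\<^sub>m n m) (1\<^sub>m n)"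
    using inv by simp
  finally have TL: "N11 + - (N12 * H) = 1\<^sub>m m" and TR: "- (N11 * C) + N12 = 0\<^sub>m m n"
    using H C N
    by (simp_all add: four_block_mat_inject[where nr = m and nc = m and nr' = n and nc' = n]
        del: four_block_one_mat)
  with H C N have N11: "N11 = 1\<^sub>m m + N12 * H" and N12: "N12 = N11 * C"
    by (auto dest!: add_uminus_eqD_mat[rotated 2] uminus_add_eqD_mat[rotated 2])
  have "N11 * (1\<^sub>m m - C * H) = N11 * 1\<^sub>m m - N11 * (C * H)"
    using H C N by (intro mult_minus_distrib_mat) auto
  also have "\<dots> = N11 + - (N12 * H)"
    using H C N by (simp add: N12 add_uminus_minus_mat[of _ m m])
  also have "\<dots> = 1\<^sub>m m"
    by (fact TL)
  finally show right: "(1\<^sub>m m + N12 * H) * (1\<^sub>m m - C * H) = 1\<^sub>m m"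
    unfolding N11[symmetric] .
  have left: "(1\<^sub>m m - C * H) * N11 = 1\<^sub>m m"
    using right H C N by (intro mat_mult_left_right_inverse[of N11 m]) (auto simp: N11[symmetric])
  have "(1\<^sub>m m - C * H) * N12 = (1\<^sub>m m - C * H) * N11 * C"
    unfolding N12 using H C N by (intro assoc_mult_mat[symmetric]) auto
  then show "C = (1\<^sub>m m - C * H) * N12"
    using left C by simp
qed

lemma stabilizing_controller_iff_youla:
  assumes H: "H \<in> carrier_mat ny nu" and H_stable: "RH_inf_mat H"
  shows "stabilizing_controller ny nu H C \<longleftrightarrow>
    (\<exists>Q \<in> carrier_mat nu ny. RH_inf_mat Q \<and>
       (\<exists>Pinv. is_inverse_mat (1\<^sub>m nu + Q * H) Pinv \<and> C = Pinv * Q))"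
proof
  assume "stabilizing_controller ny nu H C"
  then obtain N where C: "C \<in> carrier_mat nu ny"
    and inv: "is_inverse_mat (loop_mat nu ny C H) N" and N_stable: "RH_inf_mat N"
    unfolding stabilizing_controller_def by blast
  have N: "N \<in> carrier_mat (nu + ny) (nu + ny)"
    using inv H C is_inverse_mat_iff_right_inverse[of _ "nu + ny" N] by auto
  have NL: "N * loop_mat nu ny C H = 1\<^sub>m (nu + ny)"
    using inv N unfolding is_inverse_mat_def inverts_mat_def by auto
  obtain N11 N12 N21 N22 where split: "split_block N nu nu = (N11, N12, N21, N22)"
    by (metis prod_cases4)
  note blocks = split_block[OF split, of ny ny]
  have "RH_inf_mat N12"
    using N_stable N blocks RH_inf_mat_four_block_iff[of N11 nu nu N12 ny N21 ny N22] by auto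
  moreover have "is_inverse_mat (1\<^sub>m nu + N12 * H) (1\<^sub>m nu - C * H)"
    and "C = (1\<^sub>m nu - C * H) * N12"
    using youla_of_loop_mat_left_inverse[of H ny nu C N11 N12 N21 N22] NL N blocks H C
    by (auto simp: is_inverse_mat_iff_right_inverse[of _ nu])
  ultimately show "\<exists>Q \<in> carrier_mat nu ny. RH_inf_mat Q \<and>
       (\<exists>Pinv. is_inverse_mat (1\<^sub>m nu + Q * H) Pinv \<and> C = Pinv * Q)"
    using N blocks by auto
next
  assume "\<exists>Q \<in> carrier_mat nu ny. RH_inf_mat Q \<and>
       (\<exists>Pinv. is_inverse_mat (1\<^sub>m nu + Q * H) Pinv \<and> C = Pinv * Q)"
  then obtain Q Pinv where Q: "Q \<in> carrier_mat nu ny" and Q_stable: "RH_inf_mat Q"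
    and inv: "is_inverse_mat (1\<^sub>m nu + Q * H) Pinv" and C_def: "C = Pinv * Q"
    by blast
  define P where "P = 1\<^sub>m nu + Q * H"
  define N where "N = four_block_mat P Q (H * P) (1\<^sub>m ny + H * Q)"
  have P: "P \<in> carrier_mat nu nu" and Pinv: "Pinv \<in> carrier_mat nu nu"
    and "P * Pinv = 1\<^sub>m nu"
    using inv H Q by (auto simp: P_def is_inverse_mat_iff_right_inverse[of _ nu])
  then have "N * loop_mat nu ny C H = 1\<^sub>m (nu + ny)"
    unfolding N_def P_def C_def using H Q by (intro loop_mat_left_inverse_of_youla) auto
  then have "is_inverse_mat (loop_mat nu ny C H) N"
    using H Q P Pinv is_inverse_mat_iff_right_inverse[of _ "nu + ny"]
    by (auto simp: N_def C_def intro: mat_mult_left_right_inverse)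
  moreover have "RH_inf_mat N"
    unfolding N_def P_def using H Q H_stable Q_stable
    by (subst RH_inf_mat_four_block_iff[of _ nu nu _ ny _ ny])
      (auto intro!: RH_inf_mat_add RH_inf_mat_mult RH_inf_mat_one)
  ultimately show "stabilizing_controller ny nu H C"
    unfolding stabilizing_controller_def using H Q Pinv C_def by auto
qed

section \<open>The rectifier\<close>

text \<open>\<open>[I; 0]\<close> and \<open>[0, I]\<close> on the augmented measurement \<open>(y, v)\<close>, written as block
  matrices with an empty block row or column so that products are computed blockwise.\<close>

definition embed_y :: "nat \<Rightarrow> nat \<Rightarrow> 'a::comm_ring_1 mat" where
  "embed_y ny nv = four_block_mat (1\<^sub>m ny) (0\<^sub>m ny 0) (0\<^sub>m nv ny) (0\<^sub>m nv 0)"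

definition proj_v :: "nat \<Rightarrow> nat \<Rightarrow> 'a::comm_ring_1 mat" where
  "proj_v ny nv = four_block_mat (0\<^sub>m nv ny) (1\<^sub>m nv) (0\<^sub>m 0 ny) (0\<^sub>m 0 nv)"

lemma dim_embed_y [simp]: "dim_row (embed_y ny nv) = ny + nv" "dim_col (embed_y ny nv) = ny"
  by (simp_all add: embed_y_def)

lemma dim_proj_v [simp]: "dim_row (proj_v ny nv) = nv" "dim_col (proj_v ny nv) = ny + nv"
  by (simp_all add: proj_v_def)

lemma embed_y_carrier_mat: "embed_y ny nv \<in> carrier_mat (ny + nv) ny"
  by (rule carrier_matI) simp_all

lemma proj_v_carrier_mat: "proj_v ny nv \<in> carrier_mat nv (ny + nv)"
  by (rule carrier_matI) simp_all

lemma rectifier_carrier_mat: "rectifier nw nz ny nv G \<in> carrier_mat ny (ny + nv)"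
  by (simp add: rectifier_def)

lemma rectifier_block:
  "rectifier nw nz ny nv G = four_block_mat (1\<^sub>m ny) (- G_yv nw nz ny nv G) (0\<^sub>m 0 ny) (0\<^sub>m 0 nv)"
  by (rule eq_matI) (auto simp: rectifier_def G_yv_def)

lemma G_yvv_block:
  "G_yvv nw nz ny nv G = four_block_mat (G_yv nw nz ny nv G) (0\<^sub>m ny 0) (1\<^sub>m nv) (0\<^sub>m nv 0)"
  by (rule eq_matI) (auto simp: G_yvv_def G_yv_def)

lemma one_mat_zero_dim: "1\<^sub>m 0 = 0\<^sub>m 0 0"
  by (rule eq_matI) auto

lemma rectifier_embed_y: "rectifier nw nz ny nv G * embed_y ny nv = 1\<^sub>m ny"
  unfolding rectifier_block embed_y_def
  by (subst mult_four_block_mat[of _ ny ny _ nv _ 0])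
    (auto simp: G_yv_def one_mat_zero_dim[symmetric] simp del: four_block_one_mat)

lemma rectifier_G_yvv: "rectifier nw nz ny nv G * G_yvv nw nz ny nv G = 0\<^sub>m ny nv"
  unfolding rectifier_block G_yvv_block
  by (subst mult_four_block_mat[of _ ny ny _ nv _ 0]) (auto simp: G_yv_def)

lemma G_yvu_eq: "G_yvu nw nz ny nv nd nu G = embed_y ny nv * G_yu nw nz ny nv nd nu G"
  by (rule eq_matI) (auto simp: G_yvu_def G_yu_def embed_y_def scalar_prod_def
      if_distrib[of "\<lambda>a. a * _"] cong: if_cong)

lemma embed_y_rectifier_plus_G_yvv_proj_v:
  "embed_y ny nv * rectifier nw nz ny nv G + G_yvv nw nz ny nv G * proj_v ny nv = 1\<^sub>m (ny + nv)"
proof -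
  let ?V = "G_yv nw nz ny nv G"
  have V: "?V \<in> carrier_mat ny nv"
    by (simp add: G_yv_def)
  have "embed_y ny nv * rectifier nw nz ny nv G
      = four_block_mat (1\<^sub>m ny) (- ?V) (0\<^sub>m nv ny) (0\<^sub>m nv nv)"
    unfolding embed_y_def rectifier_block using V
    by (subst mult_four_block_mat[of _ ny ny _ 0 _ nv _ _ ny _ nv]) auto
  moreover have "G_yvv nw nz ny nv G * proj_v ny nv
      = four_block_mat (0\<^sub>m ny ny) ?V (0\<^sub>m nv ny) (1\<^sub>m nv)"
    unfolding G_yvv_block proj_v_def using V
    by (subst mult_four_block_mat[of _ ny nv _ 0 _ nv _ _ ny _ nv]) auto
  ultimately show ?thesis
    using V by (auto intro!: eq_matI)
qed

lemma RH_inf_mat_embed_y: "RH_inf_mat (embed_y ny nv)"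
  unfolding RH_inf_mat_def embed_y_def by (auto simp: RH_inf_0 RH_inf_1)

lemma G_yvv_left_annihilator:
  assumes Q: "Q \<in> carrier_mat n (ny + nv)" and QG: "Q * G_yvv nw nz ny nv G = 0\<^sub>m n nv"
  shows "Q = Q * embed_y ny nv * rectifier nw nz ny nv G"
proof -
  let ?E = "embed_y ny nv :: tf mat" and ?R = "rectifier nw nz ny nv G"
    and ?GV = "G_yvv nw nz ny nv G" and ?F = "proj_v ny nv :: tf mat"
  have E: "?E \<in> carrier_mat (ny + nv) ny" and R: "?R \<in> carrier_mat ny (ny + nv)"
    and F: "?F \<in> carrier_mat nv (ny + nv)"
    by (rule embed_y_carrier_mat rectifier_carrier_mat proj_v_carrier_mat)+
  have GV: "?GV \<in> carrier_mat (ny + nv) nv"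
    by (simp add: G_yvv_def)
  have "Q = Q * (?E * ?R + ?GV * ?F)"
    using Q by (simp add: embed_y_rectifier_plus_G_yvv_proj_v)
  also have "\<dots> = Q * (?E * ?R) + Q * (?GV * ?F)"
    by (rule mult_add_distrib_mat[OF Q mult_carrier_mat[OF E R] mult_carrier_mat[OF GV F]])
  also have "\<dots> = Q * ?E * ?R + Q * ?GV * ?F"
    using assoc_mult_mat[OF Q E R] assoc_mult_mat[OF Q GV F] by simp
  also have "\<dots> = Q * ?E * ?R"
    using QG left_mult_zero_mat[OF F] mult_carrier_mat[OF mult_carrier_mat[OF Q E] R]
    by simp
  finally show ?thesis .
qed

lemma rectified_G_yvu:
  assumes Q: "Q \<in> carrier_mat n ny"
  shows "Q * rectifier nw nz ny nv G * G_yvu nw nz ny nv nd nu G = Q * G_yu nw nz ny nv nd nu G"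
proof -
  let ?E = "embed_y ny nv :: tf mat" and ?R = "rectifier nw nz ny nv G"
    and ?H = "G_yu nw nz ny nv nd nu G"
  have E: "?E \<in> carrier_mat (ny + nv) ny" and R: "?R \<in> carrier_mat ny (ny + nv)"
    and H: "?H \<in> carrier_mat ny nu"
    by (simp_all add: embed_y_carrier_mat rectifier_carrier_mat G_yu_def)
  have "Q * ?R * (?E * ?H) = Q * (?R * (?E * ?H))"
    by (rule assoc_mult_mat[OF Q R mult_carrier_mat[OF E H]])
  also have "?R * (?E * ?H) = ?R * ?E * ?H"
    by (rule assoc_mult_mat[OF R E H, symmetric])
  also have "?R * ?E = 1\<^sub>m ny"
    by (rule rectifier_embed_y)
  finally show ?thesis
    using H by (simp add: G_yvu_eq)
qed

lemma output_rectifying_retrofit_iff: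
  assumes G: "G \<in> carrier_mat (nw + nz + ny) (nv + nd + nu)" and G_stable: "RH_inf_mat G"
  shows "output_rectifying_retrofit nw nz ny nv nd nu G K \<longleftrightarrow>
    (\<exists>Q \<in> carrier_mat nu ny. RH_inf_mat Q \<and>
       (\<exists>Pinv. is_inverse_mat (1\<^sub>m nu + Q * G_yu nw nz ny nv nd nu G) Pinv \<and>
         K = Pinv * Q * rectifier nw nz ny nv G))"
    (is "_ \<longleftrightarrow> (\<exists>Q \<in> _. _ \<and> (\<exists>Pinv. is_inverse_mat (_ + Q * ?H) _ \<and> K = _ * ?R))")
proof
  assume "output_rectifying_retrofit nw nz ny nv nd nu G K"
  then obtain Qr Pinv where Qr: "Qr \<in> carrier_mat nu (ny + nv)" and Qr_stable: "RH_inf_mat Qr"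
    and annihilates: "Qr * G_yvv nw nz ny nv G = 0\<^sub>m nu nv"
    and inv: "is_inverse_mat (1\<^sub>m nu + Qr * G_yvu nw nz ny nv nd nu G) Pinv"
    and K: "K = Pinv * Qr"
    unfolding output_rectifying_retrofit_def by blast
  define Q where "Q = Qr * embed_y ny nv"
  have Q: "Q \<in> carrier_mat nu ny"
    unfolding Q_def by (rule mult_carrier_mat[OF Qr embed_y_carrier_mat])
  have Qr_eq: "Qr = Q * ?R"
    unfolding Q_def by (rule G_yvv_left_annihilator[OF Qr annihilates])
  have Q_stable: "RH_inf_mat Q"
    unfolding Q_def using Qr Qr_stable RH_inf_mat_embed_y by (intro RH_inf_mat_mult) auto
  have Q_inv: "is_inverse_mat (1\<^sub>m nu + Q * ?H) Pinv"
    using inv rectified_G_yvu[OF Q] by (simp add: Qr_eq)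
  then have "Pinv \<in> carrier_mat nu nu"
    using Q by (simp add: is_inverse_mat_iff_right_inverse[of _ nu] G_yu_def)
  then have "K = Pinv * Q * ?R"
    unfolding K Qr_eq by (rule assoc_mult_mat[OF _ Q rectifier_carrier_mat, symmetric])
  with Q Q_stable Q_inv show "\<exists>Q \<in> carrier_mat nu ny. RH_inf_mat Q \<and>
      (\<exists>Pinv. is_inverse_mat (1\<^sub>m nu + Q * ?H) Pinv \<and> K = Pinv * Q * ?R)"
    by blast
next
  assume "\<exists>Q \<in> carrier_mat nu ny. RH_inf_mat Q \<and>
      (\<exists>Pinv. is_inverse_mat (1\<^sub>m nu + Q * ?H) Pinv \<and> K = Pinv * Q * ?R)"
  then obtain Q Pinv where Q: "Q \<in> carrier_mat nu ny" and Q_stable: "RH_inf_mat Q"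
    and inv: "is_inverse_mat (1\<^sub>m nu + Q * ?H) Pinv" and K: "K = Pinv * Q * ?R"
    by blast
  have R: "?R \<in> carrier_mat ny (ny + nv)"
    by (rule rectifier_carrier_mat)
  have Pinv: "Pinv \<in> carrier_mat nu nu"
    using inv Q by (simp add: is_inverse_mat_iff_right_inverse[of _ nu] G_yu_def)
  show "output_rectifying_retrofit nw nz ny nv nd nu G K"
    unfolding output_rectifying_retrofit_def
  proof (intro bexI[of _ "Q * ?R"] conjI exI[of _ Pinv])
    show "Q * ?R \<in> carrier_mat nu (ny + nv)"
      by (rule mult_carrier_mat[OF Q R])
    show "RH_inf_mat (Q * ?R)"
      using Q R Q_stable RH_inf_mat_rectifier[OF G G_stable] by (intro RH_inf_mat_mult) auto
    have "Q * ?R * G_yvv nw nz ny nv G = Q * (?R * G_yvv nw nz ny nv G)"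
      using Q R by (intro assoc_mult_mat) (auto simp: G_yvv_def)
    then show "Q * ?R * G_yvv nw nz ny nv G = 0\<^sub>m nu nv"
      using Q by (simp add: rectifier_G_yvv)
    show "is_inverse_mat (1\<^sub>m nu + Q * ?R * G_yvu nw nz ny nv nd nu G) Pinv"
      using inv by (simp only: rectified_G_yvu[OF Q])
    show "K = Pinv * (Q * ?R)"
      unfolding K by (rule assoc_mult_mat[OF Pinv Q R])
  qed
qed

theorem proposition1:
  fixes G K :: "tf mat" and nw nz ny nv nd nu :: nat
  assumes "G \<in> carrier_mat (nw + nz + ny) (nv + nd + nu)"
    and "RH_inf_mat G"
    and "K \<in> carrier_mat nu (ny + nv)"
  shows "output_rectifying_retrofit nw nz ny nv nd nu G K \<longleftrightarrow>
    (\<exists>Kh. stabilizing_controller ny nu (G_yu nw nz ny nv nd nu G) Kh \<and>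
          K = Kh * rectifier nw nz ny nv G)"
proof -
  let ?H = "G_yu nw nz ny nv nd nu G" and ?R = "rectifier nw nz ny nv G"
  have H: "?H \<in> carrier_mat ny nu"
    by (simp add: G_yu_def)
  have "output_rectifying_retrofit nw nz ny nv nd nu G K \<longleftrightarrow>
      (\<exists>Q \<in> carrier_mat nu ny. RH_inf_mat Q \<and>
         (\<exists>Pinv. is_inverse_mat (1\<^sub>m nu + Q * ?H) Pinv \<and> K = Pinv * Q * ?R))"
    by (rule output_rectifying_retrofit_iff[OF assms(1,2)])
  also have "\<dots> \<longleftrightarrow> (\<exists>Kh. (\<exists>Q \<in> carrier_mat nu ny. RH_inf_mat Q \<and>
         (\<exists>Pinv. is_inverse_mat (1\<^sub>m nu + Q * ?H) Pinv \<and> Kh = Pinv * Q)) \<and> K = Kh * ?R)"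
    by blast
  also have "\<dots> \<longleftrightarrow> (\<exists>Kh. stabilizing_controller ny nu ?H Kh \<and> K = Kh * ?R)"
    by (simp only: stabilizing_controller_iff_youla[OF H RH_inf_mat_G_yu[OF assms(1,2)]])
  finally show ?thesis .
qed

end
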